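(* Let $A$ be a dg algebra over a commutative ring $k$ and $x,x'$ Maurer–Cartan elements of $A$. Then $x$ and $x'$ are homotopy gauge equivalent if and only if they are $K_2$-homotopic.
   Context: A Maurer–Cartan element is $x\in A^1$ with $dx+x^2=0$. For such $x$, $A^{[x]}$ is the right dg $A$-module with underlying graded module $A$ and differential $a\mapsto da+xa$; $x,x'$ are homotopy gauge equivalent if $A^{[x]}$ and $A^{[x']}$ are homotopy equivalent right dg $A$-modules, i.e. there are closed degree-0 module maps in both directions whose composites are cohomologous to the identities in the dg Hom complexes. Let $I$ be the singular simplicial set of $[0,1]$. Let $K_2\subset I$ be the simplicial subset generated by the two affine singular 2-simplices $\Delta^2\to[0,1]$ sending the vertices $(x_0,x_1,x_2)$ to $(0,1,0)$ and to $(1,0,1)$ respectively; it has two nondegenerate simplices in each of dimensions 0, 1, 2. $K_2^*$ is its normalized cochain algebra with values in $k$ with the Alexander–Whitney product, and $ev_0,ev_1:K_2^*\to k$ are restriction to the 0-simplices $0$ and $1$. $x,x'$ are $K_2$-homotopic if there is a Maurer–Cartan element $X\in A\otimes K_2^*$ with $(\mathrm{id}_A\otimes ev_0)(X)=x$ and $(\mathrm{id}_A\otimes ev_1)(X)=x'$. *)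

theory Defs
  imports "HOL-Homology.Simplices"
begin

definition sgn_mult :: "int \<Rightarrow> 'a::ring \<Rightarrow> 'a" where
  "sgn_mult n a = (if even n then a else - a)"

definition dg_algebra ::
  "('k::comm_ring_1 \<Rightarrow> 'a::{ring,monoid_mult} \<Rightarrow> 'a) \<Rightarrow> (int \<Rightarrow> 'a set) \<Rightarrow> ('a \<Rightarrow> 'a) \<Rightarrow> bool" where
  "dg_algebra smult gr d \<longleftrightarrow>
     \<comment> \<open>k-module and k-algebra structure\<close>
     (\<forall>c a b. smult c (a + b) = smult c a + smult c b) \<and>
     (\<forall>c c' a. smult (c + c') a = smult c a + smult c' a) \<and>
     (\<forall>c c' a. smult (c * c') a = smult c (smult c' a)) \<and>
     (\<forall>a. smult 1 a = a) \<and>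
     (\<forall>c a b. smult c (a * b) = smult c a * b \<and> smult c (a * b) = a * smult c b) \<and>
     \<comment> \<open>grading\<close>
     (\<forall>n. 0 \<in> gr n \<and> (\<forall>a\<in>gr n. \<forall>b\<in>gr n. a + b \<in> gr n) \<and> (\<forall>a\<in>gr n. - a \<in> gr n)) \<and>
     (\<forall>n c a. a \<in> gr n \<longrightarrow> smult c a \<in> gr n) \<and>
     (\<forall>a. \<exists>!cpt :: int \<Rightarrow> 'a. finite {n. cpt n \<noteq> 0} \<and> (\<forall>n. cpt n \<in> gr n) \<and>
            a = (\<Sum>n\<in>{n. cpt n \<noteq> 0}. cpt n)) \<and>
     (\<forall>m n a b. a \<in> gr m \<longrightarrow> b \<in> gr n \<longrightarrow> a * b \<in> gr (m + n)) \<and>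
     1 \<in> gr 0 \<and>
     \<comment> \<open>differential\<close>
     (\<forall>a b. d (a + b) = d a + d b) \<and>
     (\<forall>c a. d (smult c a) = smult c (d a)) \<and>
     (\<forall>n a. a \<in> gr n \<longrightarrow> d a \<in> gr (n + 1)) \<and>
     (\<forall>a. d (d a) = 0) \<and>
     (\<forall>n a b. a \<in> gr n \<longrightarrow> d (a * b) = d a * b + sgn_mult n (a * d b))"

definition maurer_cartan :: "(int \<Rightarrow> 'a::{ring,monoid_mult} set) \<Rightarrow> ('a \<Rightarrow> 'a) \<Rightarrow> 'a \<Rightarrow> bool" where
  "maurer_cartan gr d x \<longleftrightarrow> x \<in> gr 1 \<and> d x + x * x = 0"

definition twisted_diff :: "('a::{ring,monoid_mult} \<Rightarrow> 'a) \<Rightarrow> 'a \<Rightarrow> 'a \<Rightarrow> 'a" where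
  "twisted_diff d x a = d a + x * a"

definition module_map_deg ::
  "('k::comm_ring_1 \<Rightarrow> 'a::{ring,monoid_mult} \<Rightarrow> 'a) \<Rightarrow> (int \<Rightarrow> 'a set) \<Rightarrow> int \<Rightarrow> ('a \<Rightarrow> 'a) \<Rightarrow> bool" where
  "module_map_deg smult gr n f \<longleftrightarrow>
     (\<forall>a b. f (a + b) = f a + f b) \<and>
     (\<forall>c a. f (smult c a) = smult c (f a)) \<and>
     (\<forall>a b. f (a * b) = f a * b) \<and>
     (\<forall>m a. a \<in> gr m \<longrightarrow> f a \<in> gr (m + n))"

definition closed_module_map ::
  "('k::comm_ring_1 \<Rightarrow> 'a::{ring,monoid_mult} \<Rightarrow> 'a) \<Rightarrow> (int \<Rightarrow> 'a set) \<Rightarrow> ('a \<Rightarrow> 'a) \<Rightarrow> 'a \<Rightarrow> 'a \<Rightarrow> ('a \<Rightarrow> 'a) \<Rightarrow> bool" where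
  "closed_module_map smult gr d x x' f \<longleftrightarrow>
     module_map_deg smult gr 0 f \<and> (\<forall>a. twisted_diff d x' (f a) = f (twisted_diff d x a))"

text \<open>An endomorphism e of degree 0 of A^[x] is cohomologous to the identity if
e - id is the differential of a degree -1 element h of the Hom complex, i.e.
e - id = D_x o h - (-1)^(-1) h o D_x = D_x o h + h o D_x.\<close>
definition cohomologous_to_id ::
  "('k::comm_ring_1 \<Rightarrow> 'a::{ring,monoid_mult} \<Rightarrow> 'a) \<Rightarrow> (int \<Rightarrow> 'a set) \<Rightarrow> ('a \<Rightarrow> 'a) \<Rightarrow> 'a \<Rightarrow> ('a \<Rightarrow> 'a) \<Rightarrow> bool" where
  "cohomologous_to_id smult gr d x e \<longleftrightarrow>
     (\<exists>h. module_map_deg smult gr (-1) h \<and>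
          (\<forall>a. e a - a = twisted_diff d x (h a) + h (twisted_diff d x a)))"

definition homotopy_gauge_equiv ::
  "('k::comm_ring_1 \<Rightarrow> 'a::{ring,monoid_mult} \<Rightarrow> 'a) \<Rightarrow> (int \<Rightarrow> 'a set) \<Rightarrow> ('a \<Rightarrow> 'a) \<Rightarrow> 'a \<Rightarrow> 'a \<Rightarrow> bool" where
  "homotopy_gauge_equiv smult gr d x x' \<longleftrightarrow>
     (\<exists>f g. closed_module_map smult gr d x x' f \<and> closed_module_map smult gr d x' x g \<and>
            cohomologous_to_id smult gr d x (g \<circ> f) \<and> cohomologous_to_id smult gr d x' (f \<circ> g))"

text \<open>Singular simplices of [0,1] are (extensional) maps from standard simplices to real.
For h : [p] \<rightarrow> [n] monotone, the simplicial operator h^* sends an n-simplex s to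
s composed with the affine map Delta^p \<rightarrow> Delta^n sending vertex i to vertex h i.\<close>

definition vertex_affine :: "nat \<Rightarrow> (nat \<Rightarrow> nat) \<Rightarrow> (nat \<Rightarrow> real) \<Rightarrow> nat \<Rightarrow> real" where
  "vertex_affine p h y = (\<lambda>j. \<Sum>i\<le>p. if h i = j then y i else 0)"

definition simp_op :: "nat \<Rightarrow> (nat \<Rightarrow> nat) \<Rightarrow> ((nat \<Rightarrow> real) \<Rightarrow> real) \<Rightarrow> (nat \<Rightarrow> real) \<Rightarrow> real" where
  "simp_op p h s = (\<lambda>y\<in>standard_simplex p. s (vertex_affine p h y))"

definition degeneracy :: "nat \<Rightarrow> nat \<Rightarrow> ((nat \<Rightarrow> real) \<Rightarrow> real) \<Rightarrow> (nat \<Rightarrow> real) \<Rightarrow> real" where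
  "degeneracy n j s = simp_op (Suc n) (\<lambda>i. if i \<le> j then i else i - 1) s"

definition front_face :: "nat \<Rightarrow> ((nat \<Rightarrow> real) \<Rightarrow> real) \<Rightarrow> (nat \<Rightarrow> real) \<Rightarrow> real" where
  "front_face p s = simp_op p (\<lambda>i. i) s"

definition back_face :: "nat \<Rightarrow> nat \<Rightarrow> ((nat \<Rightarrow> real) \<Rightarrow> real) \<Rightarrow> (nat \<Rightarrow> real) \<Rightarrow> real" where
  "back_face n q s = simp_op q (\<lambda>i. i + (n - q)) s"

text \<open>The two affine 2-simplices with vertex values (0,1,0) and (1,0,1).\<close>
definition sigma010 :: "(nat \<Rightarrow> real) \<Rightarrow> real" where
  "sigma010 = (\<lambda>y\<in>standard_simplex 2. y 1)"

definition sigma101 :: "(nat \<Rightarrow> real) \<Rightarrow> real" where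
  "sigma101 = (\<lambda>y\<in>standard_simplex 2. y 0 + y 2)"

definition vertex_at :: "real \<Rightarrow> (nat \<Rightarrow> real) \<Rightarrow> real" where
  "vertex_at t = (\<lambda>y\<in>standard_simplex 0. t)"

inductive_set K2 :: "(nat \<times> ((nat \<Rightarrow> real) \<Rightarrow> real)) set" where
  gen1: "(2, sigma010) \<in> K2"
| gen2: "(2, sigma101) \<in> K2"
| face: "(Suc n, s) \<in> K2 \<Longrightarrow> k \<le> Suc n \<Longrightarrow> (n, singular_face (Suc n) k s) \<in> K2"
| degen: "(n, s) \<in> K2 \<Longrightarrow> j \<le> n \<Longrightarrow> (Suc n, degeneracy n j s) \<in> K2"

definition degenerate_simplex :: "nat \<Rightarrow> ((nat \<Rightarrow> real) \<Rightarrow> real) \<Rightarrow> bool" where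
  "degenerate_simplex n s \<longleftrightarrow> (\<exists>m j t. n = Suc m \<and> j \<le> m \<and> s = degeneracy m j t)"

definition nondeg_K2 :: "nat \<Rightarrow> ((nat \<Rightarrow> real) \<Rightarrow> real) \<Rightarrow> bool" where
  "nondeg_K2 n s \<longleftrightarrow> (n, s) \<in> K2 \<and> \<not> degenerate_simplex n s"

text \<open>Since the normalized cochains K_2^* form a finitely generated free k-module (basis: the
indicator cochains of the nondegenerate simplices), A \<otimes>_k K_2^* is identified with normalized
A-valued cochains: an element of total degree m is a family X n s \<in> A^(m-n) indexed by the
n-simplices s of K_2, vanishing on degenerate simplices (X n s = a corresponds to
the sum of a \<otimes> [s]). We use the cochain differential
(\<delta>\<phi>)(s) = \<Sum>_{i=0}^{n} (-1)^i \<phi>(d_i s), the Alexander-Whitney product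
(f \<union> g)(s) = f(front_p s) g(back_q s), and the Koszul conventions
d(a \<otimes> f) = da \<otimes> f + (-1)^|a| a \<otimes> \<delta>f and (a \<otimes> f)(b \<otimes> g) = (-1)^(|f||b|) ab \<otimes> (f \<union> g).\<close>

definition K2_cochain_deg1 :: "(int \<Rightarrow> 'a::{ring,monoid_mult} set) \<Rightarrow> (nat \<Rightarrow> ((nat \<Rightarrow> real) \<Rightarrow> real) \<Rightarrow> 'a) \<Rightarrow> bool" where
  "K2_cochain_deg1 gr X \<longleftrightarrow>
     (\<forall>n s. X n s \<in> gr (1 - int n)) \<and> (\<forall>n s. \<not> nondeg_K2 n s \<longrightarrow> X n s = 0)"

text \<open>Component (dimension n, simplex s) of D X for X of total degree 1: the A-coefficient
X (n-1) of cochain degree n-1 has A-degree 1-(n-1) = 2-n, hence the sign (-1)^n.\<close>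
definition tensor_diff_deg1 :: "('a::{ring,monoid_mult} \<Rightarrow> 'a) \<Rightarrow> (nat \<Rightarrow> ((nat \<Rightarrow> real) \<Rightarrow> real) \<Rightarrow> 'a)
     \<Rightarrow> nat \<Rightarrow> ((nat \<Rightarrow> real) \<Rightarrow> real) \<Rightarrow> 'a" where
  "tensor_diff_deg1 d X n s =
     d (X n s) +
     (case n of 0 \<Rightarrow> 0
      | Suc m \<Rightarrow> sgn_mult (int n) (\<Sum>i\<le>n. sgn_mult (int i) (X m (singular_face n i s))))"

text \<open>Component (dimension n, simplex s) of X * X: terms with cochain degrees p, q = n - p;
the A-coefficient of the second factor has degree 1 - q, giving sign (-1)^(p(1-q)).\<close>
definition tensor_square_deg1 :: "(nat \<Rightarrow> ((nat \<Rightarrow> real) \<Rightarrow> real) \<Rightarrow> 'a::{ring,monoid_mult})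
     \<Rightarrow> nat \<Rightarrow> ((nat \<Rightarrow> real) \<Rightarrow> real) \<Rightarrow> 'a" where
  "tensor_square_deg1 X n s =
     (\<Sum>p\<le>n. sgn_mult (int p * (1 - int (n - p)))
                (X p (front_face p s) * X (n - p) (back_face n (n - p) s)))"

definition K2_maurer_cartan :: "(int \<Rightarrow> 'a::{ring,monoid_mult} set) \<Rightarrow> ('a \<Rightarrow> 'a)
     \<Rightarrow> (nat \<Rightarrow> ((nat \<Rightarrow> real) \<Rightarrow> real) \<Rightarrow> 'a) \<Rightarrow> bool" where
  "K2_maurer_cartan gr d X \<longleftrightarrow>
     K2_cochain_deg1 gr X \<and>
     (\<forall>n s. (n, s) \<in> K2 \<longrightarrow> tensor_diff_deg1 d X n s + tensor_square_deg1 X n s = 0)"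

definition K2_homotopic :: "(int \<Rightarrow> 'a::{ring,monoid_mult} set) \<Rightarrow> ('a \<Rightarrow> 'a) \<Rightarrow> 'a \<Rightarrow> 'a \<Rightarrow> bool" where
  "K2_homotopic gr d x x' \<longleftrightarrow>
     (\<exists>X. K2_maurer_cartan gr d X \<and> X 0 (vertex_at 0) = x \<and> X 0 (vertex_at 1) = x')"

end

theory Submission
  imports Defs
begin

text \<open>A closed module map between twisted modules, and a homotopy between such maps, is right
A-linear and hence left multiplication by an element of A. A homotopy equivalence between
A^[x] and A^[x'] therefore amounts to u, v of degree 0 and \<eta>, \<eta>' of degree -1 with
du = ux - x'u, dv = vx' - xv, d\<eta> = vu - 1 - x\<eta> - \<eta>x and d\<eta>' = uv - 1 - x'\<eta>' - \<eta>'x'.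

Every simplex of K_2 is affine, with vertex values in {0,1} changing at most twice along the
vertices. A normalized cochain on K_2 is thus determined by its values on the six
nondegenerate simplices 0, 1, [01], [10], [010], [101]; on the four edges and triangles the
Maurer-Cartan equation becomes the four equations above for v = 1 + X[01], u = 1 + X[10],
\<eta> = -X[010], \<eta>' = -X[101], and on simplices of dimension at least 3 it holds automatically.\<close>

section \<open>Affine singular simplices of [0,1]\<close>

definition affine_simplex :: "nat \<Rightarrow> (nat \<Rightarrow> real) \<Rightarrow> (nat \<Rightarrow> real) \<Rightarrow> real" where
  "affine_simplex n c = (\<lambda>y\<in>standard_simplex n. \<Sum>i\<le>n. c i * y i)"

lemma affine_simplex_eq_iff:
  "affine_simplex n c = affine_simplex n c' \<longleftrightarrow> (\<forall>i\<le>n. c i = c' i)"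
proof
  assume h: "affine_simplex n c = affine_simplex n c'"
  show "\<forall>i\<le>n. c i = c' i"
  proof (intro allI impI)
    fix i assume i: "i \<le> n"
    let ?e = "(\<lambda>j. if j = i then 1 else 0) :: nat \<Rightarrow> real"
    have "affine_simplex n c ?e = affine_simplex n c' ?e" using h by simp
    then show "c i = c' i" using i by (simp add: affine_simplex_def if_distrib cong: if_cong)
  qed
next
  assume "\<forall>i\<le>n. c i = c' i"
  then show "affine_simplex n c = affine_simplex n c'"
    unfolding affine_simplex_def by (intro restrict_ext sum.cong) auto
qed

lemma vertex_affine_sum:
  assumes "\<forall>i\<le>p. h i \<le> n"
  shows "(\<Sum>j\<le>n. c j * vertex_affine p h y j) = (\<Sum>i\<le>p. c (h i) * y i)"
proof -
  have "(\<Sum>j\<le>n. c j * vertex_affine p h y j) = (\<Sum>j\<le>n. \<Sum>i\<le>p. if h i = j then c j * y i else 0)"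
    by (simp add: vertex_affine_def sum_distrib_left if_distrib cong: if_cong)
  also have "\<dots> = (\<Sum>i\<le>p. \<Sum>j\<le>n. if h i = j then c j * y i else 0)"
    by (rule sum.swap)
  also have "\<dots> = (\<Sum>i\<le>p. c (h i) * y i)"
    using assms by (intro sum.cong) (auto simp: sum.delta')
  finally show ?thesis .
qed

lemma vertex_affine_in_standard_simplex:
  assumes "\<forall>i\<le>p. h i \<le> n" and "y \<in> standard_simplex p"
  shows "vertex_affine p h y \<in> standard_simplex n"
proof -
  have y: "\<And>i. 0 \<le> y i" "\<And>i. i > p \<Longrightarrow> y i = 0" "(\<Sum>i\<le>p. y i) = 1"
    using assms(2) by (auto simp: standard_simplex_def)
  have nonneg: "0 \<le> vertex_affine p h y j" for j
    unfolding vertex_affine_def using y by (intro sum_nonneg) auto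
  have le_1: "vertex_affine p h y j \<le> 1" for j
  proof -
    have "vertex_affine p h y j \<le> (\<Sum>i\<le>p. y i)"
      unfolding vertex_affine_def using y by (intro sum_mono) auto
    then show ?thesis using y by simp
  qed
  have vanish: "vertex_affine p h y j = 0" if "j > n" for j
    unfolding vertex_affine_def using assms(1) that by (intro sum.neutral) force
  have "(\<Sum>j\<le>n. vertex_affine p h y j) = (\<Sum>i\<le>p. y i)"
    using vertex_affine_sum[OF assms(1), of "\<lambda>_. 1" y] by simp
  then show ?thesis
    using nonneg le_1 vanish y by (auto simp: standard_simplex_def)
qed

lemma simp_op_affine_simplex:
  assumes "\<forall>i\<le>p. h i \<le> n"
  shows "simp_op p h (affine_simplex n c) = affine_simplex p (c \<circ> h)"
  unfolding simp_op_def affine_simplex_def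
  using vertex_affine_in_standard_simplex[OF assms] vertex_affine_sum[OF assms]
  by (intro restrict_ext) auto

definition coface :: "nat \<Rightarrow> nat \<Rightarrow> nat" where
  "coface k i = (if i < k then i else Suc i)"

definition codegeneracy :: "nat \<Rightarrow> nat \<Rightarrow> nat" where
  "codegeneracy j i = (if i \<le> j then i else i - 1)"

lemma simplical_face_eq_vertex_affine:
  assumes "k \<le> Suc n" and "y \<in> standard_simplex n"
  shows "simplical_face k y = vertex_affine n (coface k) y"
proof
  fix j
  have vanish: "\<And>i. i > n \<Longrightarrow> y i = 0"
    using assms(2) by (auto simp: standard_simplex_def)
  consider "j < k" | "j = k" | "j > k" by linarith
  then show "simplical_face k y j = vertex_affine n (coface k) y j"
  proof cases
    case 1
    then have "vertex_affine n (coface k) y j = (\<Sum>i\<le>n. if i = j then y i else 0)"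
      unfolding vertex_affine_def by (intro sum.cong) (auto simp: coface_def)
    also have "\<dots> = y j"
      using 1 assms(1) by (simp add: sum.delta')
    finally show ?thesis using 1 by (simp add: simplical_face_def)
  next
    case 2
    then show ?thesis
      by (simp add: simplical_face_def vertex_affine_def coface_def) (intro sum.neutral; auto)
  next
    case 3
    then have "vertex_affine n (coface k) y j = (\<Sum>i\<le>n. if i = j - 1 then y i else 0)"
      unfolding vertex_affine_def by (intro sum.cong) (auto simp: coface_def)
    also have "\<dots> = y (j - 1)"
      using vanish[of "j - 1"] by (auto simp: sum.delta')
    finally show ?thesis using 3 by (simp add: simplical_face_def)
  qed
qed

lemma singular_face_affine_simplex:
  assumes "k \<le> Suc n"
  shows "singular_face (Suc n) k (affine_simplex (Suc n) c) = affine_simplex n (c \<circ> coface k)"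
  unfolding singular_face_def affine_simplex_def[of n]
proof (simp only: diff_Suc_Suc diff_zero, intro restrict_ext)
  fix y assume y: "y \<in> standard_simplex n"
  have coface_le: "\<forall>i\<le>n. coface k i \<le> Suc n"
    using assms by (auto simp: coface_def)
  have "simplical_face k y \<in> standard_simplex (Suc n)"
    using simplical_face_in_standard_simplex[of "Suc n" k y] assms y by simp
  then show "(affine_simplex (Suc n) c \<circ> simplical_face k) y = (\<Sum>i\<le>n. (c \<circ> coface k) i * y i)"
    using simplical_face_eq_vertex_affine[OF assms y] vertex_affine_sum[OF coface_le, of c y]
    by (simp add: affine_simplex_def)
qed

lemma front_face_affine_simplex:
  "p \<le> n \<Longrightarrow> front_face p (affine_simplex n c) = affine_simplex p c"
  unfolding front_face_def by (subst simp_op_affine_simplex) (auto simp: o_def)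

lemma back_face_affine_simplex:
  "q \<le> n \<Longrightarrow> back_face n q (affine_simplex n c) = affine_simplex q (\<lambda>i. c (i + (n - q)))"
  unfolding back_face_def by (subst simp_op_affine_simplex) (auto simp: o_def)

lemma degeneracy_affine_simplex:
  "j \<le> n \<Longrightarrow> degeneracy n j (affine_simplex n c) = affine_simplex (Suc n) (c \<circ> codegeneracy j)"
  unfolding degeneracy_def codegeneracy_def[abs_def] by (subst simp_op_affine_simplex) auto

lemma degeneracy_vertex_values:
  assumes "affine_simplex (Suc m) c = degeneracy m j t" and "j \<le> m"
  shows "c j = c (Suc j)"
proof -
  let ?e = "\<lambda>i. (\<lambda>l. if l = i then 1 else 0) :: nat \<Rightarrow> real"
  define h where "h = (\<lambda>i::nat. if i \<le> j then i else i - 1)"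
  have vertex: "vertex_affine (Suc m) h (?e k) = ?e (h k)" if "k \<le> Suc m" for k
  proof
    fix l
    have "vertex_affine (Suc m) h (?e k) l =
        (\<Sum>i\<le>Suc m. if i = k then (if h k = l then 1 else 0) else 0)"
      unfolding vertex_affine_def by (intro sum.cong) auto
    also have "\<dots> = ?e (h k) l"
      using that by (simp add: sum.delta')
    finally show "vertex_affine (Suc m) h (?e k) l = ?e (h k) l" .
  qed
  have "vertex_affine (Suc m) h (?e j) = vertex_affine (Suc m) h (?e (Suc j))"
    using vertex[of j] vertex[of "Suc j"] assms(2) by (simp add: h_def)
  then have "affine_simplex (Suc m) c (?e j) = affine_simplex (Suc m) c (?e (Suc j))"
    using assms by (simp add: degeneracy_def simp_op_def h_def)
  then show ?thesis
    using assms(2) by (simp add: affine_simplex_def if_distrib cong: if_cong)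
qed

definition affine_edge :: "real \<Rightarrow> real \<Rightarrow> (nat \<Rightarrow> real) \<Rightarrow> real" where
  "affine_edge a b = affine_simplex 1 (\<lambda>i. if i = 0 then a else b)"

definition affine_triangle :: "real \<Rightarrow> real \<Rightarrow> real \<Rightarrow> (nat \<Rightarrow> real) \<Rightarrow> real" where
  "affine_triangle a b e = affine_simplex 2 (\<lambda>i. if i = 0 then a else if i = 1 then b else e)"

lemma affine_simplex_0: "affine_simplex 0 c = vertex_at (c 0)"
  unfolding affine_simplex_def vertex_at_def
  by (intro restrict_ext) (auto simp: standard_simplex_def)

lemma affine_simplex_1: "affine_simplex (Suc 0) c = affine_edge (c 0) (c 1)"
  unfolding affine_edge_def One_nat_def affine_simplex_eq_iff by (auto simp: le_Suc_eq)

lemma affine_simplex_2: "affine_simplex 2 c = affine_triangle (c 0) (c 1) (c 2)"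
  unfolding affine_triangle_def affine_simplex_eq_iff by (auto simp: le_Suc_eq numeral_2_eq_2)

lemma vertex_at_eq_iff: "vertex_at a = vertex_at b \<longleftrightarrow> a = b"
  using affine_simplex_eq_iff[of 0 "\<lambda>_. a" "\<lambda>_. b"] by (simp add: affine_simplex_0)

lemma affine_edge_eq_iff: "affine_edge a b = affine_edge a' b' \<longleftrightarrow> a = a' \<and> b = b'"
  unfolding affine_edge_def affine_simplex_eq_iff by (auto simp: le_Suc_eq)

lemma affine_triangle_eq_iff:
  "affine_triangle a b e = affine_triangle a' b' e' \<longleftrightarrow> a = a' \<and> b = b' \<and> e = e'"
  unfolding affine_triangle_def affine_simplex_eq_iff by (auto simp: le_Suc_eq numeral_2_eq_2)

lemma affine_edge_degenerate: "degenerate_simplex 1 (affine_edge a a)"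
proof -
  have "affine_edge a a = degeneracy 0 0 (affine_simplex 0 (\<lambda>_. a))"
    by (simp add: degeneracy_affine_simplex affine_simplex_1)
  then show ?thesis unfolding degenerate_simplex_def by auto
qed

lemma affine_edge_nondegenerate: "a \<noteq> b \<Longrightarrow> \<not> degenerate_simplex 1 (affine_edge a b)"
  unfolding degenerate_simplex_def affine_edge_def
  by (auto dest!: degeneracy_vertex_values)

lemma affine_triangle_nondegenerate:
  "a \<noteq> b \<Longrightarrow> b \<noteq> e \<Longrightarrow> \<not> degenerate_simplex 2 (affine_triangle a b e)"
  unfolding degenerate_simplex_def affine_triangle_def
  by (auto simp: numeral_2_eq_2 le_Suc_eq split: if_splits dest!: degeneracy_vertex_values)

lemma vertex_nondegenerate: "\<not> degenerate_simplex 0 s"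
  unfolding degenerate_simplex_def by auto

section \<open>The simplices of K_2\<close>

definition zero_one_valued :: "(nat \<Rightarrow> real) \<Rightarrow> bool" where
  "zero_one_valued c \<longleftrightarrow> (\<forall>i. c i = 0 \<or> c i = 1)"

definition at_most_two_switches :: "nat \<Rightarrow> (nat \<Rightarrow> real) \<Rightarrow> bool" where
  "at_most_two_switches n c \<longleftrightarrow>
     \<not> (\<exists>i j k l. i < j \<and> j < k \<and> k < l \<and> l \<le> n \<and> c i \<noteq> c j \<and> c j \<noteq> c k \<and> c k \<noteq> c l)"

lemma at_most_two_switches_comp:
  assumes "at_most_two_switches n c"
    and mono: "\<And>i j. i \<le> j \<Longrightarrow> h i \<le> h j" and range: "\<And>i. i \<le> p \<Longrightarrow> h i \<le> n"
  shows "at_most_two_switches p (c \<circ> h)"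
  unfolding at_most_two_switches_def
proof
  assume "\<exists>i j k l. i < j \<and> j < k \<and> k < l \<and> l \<le> p \<and>
    (c \<circ> h) i \<noteq> (c \<circ> h) j \<and> (c \<circ> h) j \<noteq> (c \<circ> h) k \<and> (c \<circ> h) k \<noteq> (c \<circ> h) l"
  then obtain i j k l where ijkl: "i < j" "j < k" "k < l" "l \<le> p"
    and switches: "c (h i) \<noteq> c (h j)" "c (h j) \<noteq> c (h k)" "c (h k) \<noteq> c (h l)"
    by auto
  have strict: "h a < h b" if "a < b" "c (h a) \<noteq> c (h b)" for a b
    using mono[of a b] that by (metis le_neq_implies_less less_imp_le)
  have "h i < h j" "h j < h k" "h k < h l" "h l \<le> n"
    using strict ijkl switches range by auto
  then show False
    using assms(1) switches unfolding at_most_two_switches_def by blast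
qed

lemma sigma010_eq_affine_triangle: "sigma010 = affine_triangle 0 1 0"
  unfolding sigma010_def affine_triangle_def affine_simplex_def
  by (intro restrict_ext) (simp add: numeral_2_eq_2)

lemma sigma101_eq_affine_triangle: "sigma101 = affine_triangle 1 0 1"
  unfolding sigma101_def affine_triangle_def affine_simplex_def
  by (intro restrict_ext) (simp add: numeral_2_eq_2)

lemma K2_affine_simplex:
  "(n, s) \<in> K2 \<Longrightarrow> \<exists>c. s = affine_simplex n c \<and> zero_one_valued c \<and> at_most_two_switches n c"
proof (induction rule: K2.induct)
  case gen1
  show ?case
    by (rule exI[of _ "\<lambda>i. if i = 0 then 0 else if i = 1 then 1 else 0"])
      (auto simp: sigma010_eq_affine_triangle affine_triangle_def zero_one_valued_def
         at_most_two_switches_def)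
next
  case gen2
  show ?case
    by (rule exI[of _ "\<lambda>i. if i = 0 then 1 else if i = 1 then 0 else 1"])
      (auto simp: sigma101_eq_affine_triangle affine_triangle_def zero_one_valued_def
         at_most_two_switches_def)
next
  case (face n s k)
  then obtain c where c: "s = affine_simplex (Suc n) c" "zero_one_valued c"
    "at_most_two_switches (Suc n) c" by blast
  show ?case
  proof (intro exI conjI)
    show "singular_face (Suc n) k s = affine_simplex n (c \<circ> coface k)"
      using c face by (simp add: singular_face_affine_simplex)
    show "zero_one_valued (c \<circ> coface k)"
      using c by (simp add: zero_one_valued_def)
    show "at_most_two_switches n (c \<circ> coface k)"
      using face(2) by (intro at_most_two_switches_comp[OF c(3)]) (auto simp: coface_def)
  qed
next
  case (degen n s j)
  then obtain c where c: "s = affine_simplex n c" "zero_one_valued c"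
    "at_most_two_switches n c" by blast
  show ?case
  proof (intro exI conjI)
    show "degeneracy n j s = affine_simplex (Suc n) (c \<circ> codegeneracy j)"
      using c degen by (simp add: degeneracy_affine_simplex)
    show "zero_one_valued (c \<circ> codegeneracy j)"
      using c by (simp add: zero_one_valued_def)
    show "at_most_two_switches (Suc n) (c \<circ> codegeneracy j)"
      using degen(2) by (intro at_most_two_switches_comp[OF c(3)]) (auto simp: codegeneracy_def)
  qed
qed

lemma K2_triangle010: "(2, affine_triangle 0 1 0) \<in> K2"
  using K2.gen1 by (simp add: sigma010_eq_affine_triangle)

lemma K2_triangle101: "(2, affine_triangle 1 0 1) \<in> K2"
  using K2.gen2 by (simp add: sigma101_eq_affine_triangle)

lemma K2_edge01: "(1, affine_edge 0 1) \<in> K2"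
proof -
  have "(1, singular_face (Suc 1) 2 (affine_triangle 0 1 0)) \<in> K2"
    using K2.face[of 1 "affine_triangle 0 1 0" 2] K2_triangle010 by (simp add: numeral_2_eq_2)
  then show ?thesis
    by (simp add: affine_triangle_def numeral_2_eq_2 singular_face_affine_simplex affine_simplex_1
        coface_def)
qed

lemma K2_edge10: "(1, affine_edge 1 0) \<in> K2"
proof -
  have "(1, singular_face (Suc 1) 0 (affine_triangle 0 1 0)) \<in> K2"
    using K2.face[of 1 "affine_triangle 0 1 0" 0] K2_triangle010 by (simp add: numeral_2_eq_2)
  then show ?thesis
    by (simp add: affine_triangle_def numeral_2_eq_2 singular_face_affine_simplex affine_simplex_1
        coface_def)
qed

lemma K2_vertex0: "(0, vertex_at 0) \<in> K2"
proof -
  have "(0, singular_face (Suc 0) 1 (affine_edge 0 1)) \<in> K2"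
    using K2.face[of 0 "affine_edge 0 1" 1] K2_edge01 by simp
  then show ?thesis
    by (simp add: affine_edge_def singular_face_affine_simplex affine_simplex_0 coface_def)
qed

lemma K2_vertex1: "(0, vertex_at 1) \<in> K2"
proof -
  have "(0, singular_face (Suc 0) 0 (affine_edge 0 1)) \<in> K2"
    using K2.face[of 0 "affine_edge 0 1" 0] K2_edge01 by simp
  then show ?thesis
    by (simp add: affine_edge_def singular_face_affine_simplex affine_simplex_0 coface_def)
qed

lemma nondeg_K2_generators:
  "nondeg_K2 0 (vertex_at 0)" "nondeg_K2 0 (vertex_at 1)"
  "nondeg_K2 1 (affine_edge 0 1)" "nondeg_K2 1 (affine_edge 1 0)"
  "nondeg_K2 2 (affine_triangle 0 1 0)" "nondeg_K2 2 (affine_triangle 1 0 1)"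
  unfolding nondeg_K2_def
  using K2_vertex0 K2_vertex1 K2_edge01 K2_edge10 K2_triangle010 K2_triangle101
    vertex_nondegenerate affine_edge_nondegenerate[of 0 1] affine_edge_nondegenerate[of 1 0]
    affine_triangle_nondegenerate[of 0 1 0] affine_triangle_nondegenerate[of 1 0 1]
  by simp_all

section \<open>The Maurer-Cartan equation on K_2\<close>

text \<open>The component of dY + Y^2 at the affine simplex with vertex values c, for a cochain Y
given as a function of vertex values.\<close>
definition mc_component ::
  "('a::{ring,monoid_mult} \<Rightarrow> 'a) \<Rightarrow> (nat \<Rightarrow> (nat \<Rightarrow> real) \<Rightarrow> 'a) \<Rightarrow> nat \<Rightarrow> (nat \<Rightarrow> real) \<Rightarrow> 'a"
where
  "mc_component d Y n c = d (Y n c) +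
     (case n of 0 \<Rightarrow> 0
      | Suc m \<Rightarrow> sgn_mult (int n) (\<Sum>i\<le>n. sgn_mult (int i) (Y m (c \<circ> coface i)))) +
     (\<Sum>p\<le>n. sgn_mult (int p * (1 - int (n - p))) (Y p c * Y (n - p) (\<lambda>i. c (i + p))))"

lemma mc_component_affine_simplex:
  "tensor_diff_deg1 d X n (affine_simplex n c) + tensor_square_deg1 X n (affine_simplex n c) =
     mc_component d (\<lambda>m c. X m (affine_simplex m c)) n c"
proof -
  have "tensor_diff_deg1 d X n (affine_simplex n c) = d (X n (affine_simplex n c)) +
     (case n of 0 \<Rightarrow> 0
      | Suc m \<Rightarrow> sgn_mult (int n) (\<Sum>i\<le>n. sgn_mult (int i) (X m (affine_simplex m (c \<circ> coface i)))))"
    unfolding tensor_diff_deg1_def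
    by (cases n) (auto intro!: sum.cong simp: singular_face_affine_simplex)
  moreover have "tensor_square_deg1 X n (affine_simplex n c) =
      (\<Sum>p\<le>n. sgn_mult (int p * (1 - int (n - p)))
        (X p (affine_simplex p c) * X (n - p) (affine_simplex (n - p) (\<lambda>i. c (i + p)))))"
    unfolding tensor_square_deg1_def
    by (intro sum.cong) (auto simp: front_face_affine_simplex back_face_affine_simplex)
  ultimately show ?thesis
    unfolding mc_component_def by simp
qed

definition K2_cochain ::
  "'a \<Rightarrow> 'a \<Rightarrow> 'a \<Rightarrow> 'a \<Rightarrow> 'a \<Rightarrow> 'a \<Rightarrow> nat \<Rightarrow> ((nat \<Rightarrow> real) \<Rightarrow> real) \<Rightarrow> 'a::{ring,monoid_mult}"
where
  "K2_cochain x x' a01 a10 b010 b101 m s =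
    (if m = 0 then (if s = vertex_at 0 then x else if s = vertex_at 1 then x' else 0)
     else if m = 1 then
       (if s = affine_edge 0 1 then a01 else if s = affine_edge 1 0 then a10 else 0)
     else if m = 2 then
       (if s = affine_triangle 0 1 0 then b010 else if s = affine_triangle 1 0 1 then b101 else 0)
     else 0)"

definition label_cochain ::
  "'a \<Rightarrow> 'a \<Rightarrow> 'a \<Rightarrow> 'a \<Rightarrow> 'a \<Rightarrow> 'a \<Rightarrow> nat \<Rightarrow> (nat \<Rightarrow> real) \<Rightarrow> 'a::{ring,monoid_mult}"
where
  "label_cochain x x' a01 a10 b010 b101 m c =
    (if m = 0 then (if c 0 = 0 then x else if c 0 = 1 then x' else 0)
     else if m = 1 then
       (if c 0 = 0 \<and> c 1 = 1 then a01 else if c 0 = 1 \<and> c 1 = 0 then a10 else 0)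
     else if m = 2 then
       (if c 0 = 0 \<and> c 1 = 1 \<and> c 2 = 0 then b010
        else if c 0 = 1 \<and> c 1 = 0 \<and> c 2 = 1 then b101 else 0)
     else 0)"

lemma K2_cochain_affine_simplex:
  "(\<lambda>m c. K2_cochain x x' a01 a10 b010 b101 m (affine_simplex m c)) =
     label_cochain x x' a01 a10 b010 b101"
proof (intro ext)
  fix m :: nat and c
  consider "m = 0" | "m = 1" | "m = 2" | "m \<notin> {0, 1, 2}" by blast
  then show "K2_cochain x x' a01 a10 b010 b101 m (affine_simplex m c) =
      label_cochain x x' a01 a10 b010 b101 m c"
  proof cases
    case 1
    then show ?thesis
      by (simp add: K2_cochain_def label_cochain_def affine_simplex_0 vertex_at_eq_iff)
  next
    case 2
    then show ?thesis
      by (simp add: K2_cochain_def label_cochain_def affine_simplex_1 affine_edge_eq_iff)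
  next
    case 3
    then show ?thesis
      by (simp add: K2_cochain_def label_cochain_def affine_simplex_2 affine_triangle_eq_iff)
  next
    case 4
    then show ?thesis by (simp add: K2_cochain_def label_cochain_def)
  qed
qed

definition edge_triangle_mc_equations ::
  "('a::{ring,monoid_mult} \<Rightarrow> 'a) \<Rightarrow> 'a \<Rightarrow> 'a \<Rightarrow> 'a \<Rightarrow> 'a \<Rightarrow> 'a \<Rightarrow> 'a \<Rightarrow> bool"
where
  "edge_triangle_mc_equations d x x' a01 a10 b010 b101 \<longleftrightarrow>
     d a01 = x' - x - x * a01 + a01 * x' \<and>
     d a10 = x - x' - x' * a10 + a10 * x \<and>
     d b010 = - a10 - a01 - x * b010 - b010 * x - a01 * a10 \<and>
     d b101 = - a01 - a10 - x' * b101 - b101 * x' - a10 * a01"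

lemma sgn_mult_0 [simp]: "sgn_mult n 0 = 0"
  by (simp add: sgn_mult_def)

lemma two_dvd_Suc_Suc_iff: "Suc (Suc 0) dvd Suc (Suc n) \<longleftrightarrow> Suc (Suc 0) dvd n"
  using dvd_add_right_iff[of "Suc (Suc 0)" "Suc (Suc 0)" n] by simp

lemma label_cochain_ge_3: "m \<ge> 3 \<Longrightarrow> label_cochain x x' a01 a10 b010 b101 m c = 0"
  by (simp add: label_cochain_def)

lemma mc_component_le_2:
  assumes "d 0 = 0" and "zero_one_valued c" and "n \<le> 2"
    and "d x = - (x * x)" and "d x' = - (x' * x')"
    and eqs: "edge_triangle_mc_equations d x x' a01 a10 b010 b101"
  shows "mc_component d (label_cochain x x' a01 a10 b010 b101) n c = 0"
proof -
  have c: "c 0 = 0 \<or> c 0 = 1" "c 1 = 0 \<or> c 1 = 1" "c 2 = 0 \<or> c 2 = 1"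
    using assms(2) by (auto simp: zero_one_valued_def)
  consider "n = 0" | "n = 1" | "n = 2" using assms(3) by linarith
  then show ?thesis
  proof cases
    case 1
    then show ?thesis
      using c(1)
      by (elim disjE) (simp_all add: mc_component_def label_cochain_def sgn_mult_def assms(1,4,5))
  next
    case 2
    then show ?thesis
      using c(1,2)
      by (elim disjE) (simp_all add: assms(1) eqs[unfolded edge_triangle_mc_equations_def]
          mc_component_def label_cochain_def eval_nat_numeral
          sgn_mult_def coface_def o_def two_dvd_Suc_Suc_iff algebra_simps)
  next
    case 3
    then show ?thesis
      using c
      by (elim disjE) (simp_all add: assms(1) eqs[unfolded edge_triangle_mc_equations_def]
          mc_component_def label_cochain_def eval_nat_numeral
          sgn_mult_def coface_def o_def two_dvd_Suc_Suc_iff algebra_simps)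
  qed
qed

lemma mc_component_3:
  assumes "d 0 = 0" and "zero_one_valued c" and "at_most_two_switches 3 c"
  shows "mc_component d (label_cochain x x' a01 a10 b010 b101) 3 c = 0"
proof -
  have "(0::nat) < 1 \<and> (1::nat) < 2 \<and> (2::nat) < 3 \<and> (3::nat) \<le> 3" by simp
  then have "\<not> (c 0 \<noteq> c 1 \<and> c 1 \<noteq> c 2 \<and> c 2 \<noteq> c 3)"
    using assms(3) unfolding at_most_two_switches_def by blast
  moreover have "c 0 = 0 \<or> c 0 = 1" "c 1 = 0 \<or> c 1 = 1" "c 2 = 0 \<or> c 2 = 1" "c 3 = 0 \<or> c 3 = 1"
    using assms(2) by (auto simp: zero_one_valued_def)
  ultimately show ?thesis
    using assms(1)
    by (elim disjE) (simp_all add: mc_component_def label_cochain_def eval_nat_numeral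
        sgn_mult_def coface_def o_def two_dvd_Suc_Suc_iff)
qed

text \<open>In dimension 4 only the product of the two triangle values can be nonzero, and it
requires c to switch between each of c 0, c 1, c 2, c 3.\<close>
lemma mc_component_4:
  assumes "d 0 = 0" and "at_most_two_switches 4 c"
  shows "mc_component d (label_cochain x x' a01 a10 b010 b101) 4 c = 0"
proof -
  let ?X = "label_cochain x x' a01 a10 b010 b101"
  have "(0::nat) < 1 \<and> (1::nat) < 2 \<and> (2::nat) < 3 \<and> (3::nat) \<le> 4" by simp
  then have "\<not> (c 0 \<noteq> c 1 \<and> c 1 \<noteq> c 2 \<and> c 2 \<noteq> c 3)"
    using assms(2) unfolding at_most_two_switches_def by blast
  then have middle: "?X 2 c * ?X 2 (\<lambda>i. c (i + 2)) = 0"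
    by (auto simp: label_cochain_def eval_nat_numeral)
  have "(\<Sum>p\<le>4. sgn_mult (int p * (1 - int (4 - p))) (?X p c * ?X (4 - p) (\<lambda>i. c (i + p)))) = 0"
  proof (intro sum.neutral ballI)
    fix p :: nat
    assume "p \<in> {..4}"
    then consider "p = 2" | "p \<ge> 3" | "4 - p \<ge> 3" by fastforce
    then have "?X p c * ?X (4 - p) (\<lambda>i. c (i + p)) = 0"
      using middle by cases (simp_all add: label_cochain_ge_3)
    then show "sgn_mult (int p * (1 - int (4 - p))) (?X p c * ?X (4 - p) (\<lambda>i. c (i + p))) = 0"
      by simp
  qed
  moreover have "?X 4 c = 0" "\<And>i. ?X 3 (c \<circ> coface i) = 0"
    by (simp_all add: label_cochain_ge_3)
  ultimately show ?thesis
    using assms(1) by (simp add: mc_component_def eval_nat_numeral)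
qed

lemma mc_component_ge_5:
  assumes "d 0 = 0" and "n \<ge> 5"
  shows "mc_component d (label_cochain x x' a01 a10 b010 b101) n c = 0"
proof -
  let ?X = "label_cochain x x' a01 a10 b010 b101"
  obtain m where m: "n = Suc m" "m \<ge> 4"
    using assms(2) by (cases n) auto
  have "(\<Sum>p\<le>n. sgn_mult (int p * (1 - int (n - p))) (?X p c * ?X (n - p) (\<lambda>i. c (i + p)))) = 0"
  proof (intro sum.neutral ballI)
    fix p
    have "?X p c * ?X (n - p) (\<lambda>i. c (i + p)) = 0"
      using assms(2) by (cases "p \<ge> 3") (simp_all add: label_cochain_ge_3)
    then show "sgn_mult (int p * (1 - int (n - p))) (?X p c * ?X (n - p) (\<lambda>i. c (i + p))) = 0"
      by simp
  qed
  moreover have "?X n c = 0" "\<And>i. ?X m (c \<circ> coface i) = 0"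
    using assms(2) m(2) by (simp_all add: label_cochain_ge_3)
  ultimately show ?thesis
    using assms(1) m(1) by (simp add: mc_component_def)
qed

lemma mc_equation_K2_cochain:
  assumes "d 0 = 0" and "(n, s) \<in> K2"
    and "d x = - (x * x)" and "d x' = - (x' * x')"
    and "edge_triangle_mc_equations d x x' a01 a10 b010 b101"
  shows "tensor_diff_deg1 d (K2_cochain x x' a01 a10 b010 b101) n s +
    tensor_square_deg1 (K2_cochain x x' a01 a10 b010 b101) n s = 0"
proof -
  obtain c where c: "s = affine_simplex n c" "zero_one_valued c" "at_most_two_switches n c"
    using K2_affine_simplex[OF assms(2)] by blast
  consider "n \<le> 2" | "n = 3" | "n = 4" | "n \<ge> 5" by linarith
  then have "mc_component d (label_cochain x x' a01 a10 b010 b101) n c = 0"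
  proof cases
    case 1
    then show ?thesis by (rule mc_component_le_2[OF assms(1) c(2) _ assms(3-5)])
  next
    case 2
    then show ?thesis using mc_component_3[of d c, OF assms(1) c(2)] c(3) by simp
  next
    case 3
    then show ?thesis using mc_component_4[of d c, OF assms(1)] c(3) by simp
  next
    case 4
    then show ?thesis using mc_component_ge_5[of d, OF assms(1)] by simp
  qed
  then show ?thesis
    unfolding c(1) mc_component_affine_simplex K2_cochain_affine_simplex .
qed

lemma edge_triangle_mc_equations_of_K2_maurer_cartan:
  assumes "K2_maurer_cartan gr d X"
    and x: "X 0 (vertex_at 0) = x" and x': "X 0 (vertex_at 1) = x'"
  shows "edge_triangle_mc_equations d x x' (X 1 (affine_edge 0 1)) (X 1 (affine_edge 1 0))
    (X 2 (affine_triangle 0 1 0)) (X 2 (affine_triangle 1 0 1))"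
proof -
  have mc: "mc_component d (\<lambda>m c. X m (affine_simplex m c)) n c = 0"
    if "(n, affine_simplex n c) \<in> K2" for n c
    using assms(1) that mc_component_affine_simplex[of d X n c]
    unfolding K2_maurer_cartan_def by simp
  have "X 1 (affine_edge 0 0) = 0" "X 1 (affine_edge 1 1) = 0"
    using assms(1) affine_edge_degenerate
    unfolding K2_maurer_cartan_def K2_cochain_deg1_def nondeg_K2_def by auto
  note degenerate_edges = this
  show ?thesis
    unfolding edge_triangle_mc_equations_def
  proof (intro conjI)
    have "mc_component d (\<lambda>m c. X m (affine_simplex m c)) 1 (\<lambda>i. if i = 0 then 0 else 1) = 0"
      by (rule mc) (use K2_edge01 in \<open>simp add: affine_simplex_1\<close>)
    then show "d (X 1 (affine_edge 0 1)) =
        x' - x - x * X 1 (affine_edge 0 1) + X 1 (affine_edge 0 1) * x'"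
      using x x' by (simp add: mc_component_def sgn_mult_def coface_def o_def affine_simplex_0
          affine_simplex_1 algebra_simps)
    have "mc_component d (\<lambda>m c. X m (affine_simplex m c)) 1 (\<lambda>i. if i = 0 then 1 else 0) = 0"
      by (rule mc) (use K2_edge10 in \<open>simp add: affine_simplex_1\<close>)
    then show "d (X 1 (affine_edge 1 0)) =
        x - x' - x' * X 1 (affine_edge 1 0) + X 1 (affine_edge 1 0) * x"
      using x x' by (simp add: mc_component_def sgn_mult_def coface_def o_def affine_simplex_0
          affine_simplex_1 algebra_simps)
    have "mc_component d (\<lambda>m c. X m (affine_simplex m c)) 2
        (\<lambda>i. if i = 0 then 0 else if i = 1 then 1 else 0) = 0"
      by (rule mc) (use K2_triangle010 in \<open>simp add: affine_simplex_2\<close>)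
    then show "d (X 2 (affine_triangle 0 1 0)) = - X 1 (affine_edge 1 0) - X 1 (affine_edge 0 1)
        - x * X 2 (affine_triangle 0 1 0) - X 2 (affine_triangle 0 1 0) * x
        - X 1 (affine_edge 0 1) * X 1 (affine_edge 1 0)"
      using x x' degenerate_edges
      by (simp add: mc_component_def sgn_mult_def coface_def o_def affine_simplex_0
          affine_simplex_1 affine_simplex_2 affine_simplex_2[unfolded numeral_2_eq_2]
          eval_nat_numeral two_dvd_Suc_Suc_iff algebra_simps)
        (simp add: eq_neg_iff_add_eq_0 algebra_simps)
    have "mc_component d (\<lambda>m c. X m (affine_simplex m c)) 2
        (\<lambda>i. if i = 0 then 1 else if i = 1 then 0 else 1) = 0"
      by (rule mc) (use K2_triangle101 in \<open>simp add: affine_simplex_2\<close>)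
    then show "d (X 2 (affine_triangle 1 0 1)) = - X 1 (affine_edge 0 1) - X 1 (affine_edge 1 0)
        - x' * X 2 (affine_triangle 1 0 1) - X 2 (affine_triangle 1 0 1) * x'
        - X 1 (affine_edge 1 0) * X 1 (affine_edge 0 1)"
      using x x' degenerate_edges
      by (simp add: mc_component_def sgn_mult_def coface_def o_def affine_simplex_0
          affine_simplex_1 affine_simplex_2 affine_simplex_2[unfolded numeral_2_eq_2]
          eval_nat_numeral two_dvd_Suc_Suc_iff algebra_simps)
        (simp add: eq_neg_iff_add_eq_0 algebra_simps)
  qed
qed

section \<open>Module maps between twisted modules\<close>

definition homotopy_equivalence_data ::
  "(int \<Rightarrow> 'a::{ring,monoid_mult} set) \<Rightarrow> ('a \<Rightarrow> 'a) \<Rightarrow> 'a \<Rightarrow> 'a \<Rightarrow> 'a \<Rightarrow> 'a \<Rightarrow> 'a \<Rightarrow> 'a \<Rightarrow> bool"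
where
  "homotopy_equivalence_data gr d x x' u v \<eta> \<eta>' \<longleftrightarrow>
     u \<in> gr 0 \<and> d u = u * x - x' * u \<and>
     v \<in> gr 0 \<and> d v = v * x' - x * v \<and>
     \<eta> \<in> gr (-1) \<and> d \<eta> = v * u - 1 - x * \<eta> - \<eta> * x \<and>
     \<eta>' \<in> gr (-1) \<and> d \<eta>' = u * v - 1 - x' * \<eta>' - \<eta>' * x'"

lemma left_mult_eq_iff: "(\<forall>a. p * a = q * (a::'a::monoid_mult)) \<longleftrightarrow> p = q"
  by (metis mult_1_right)

context
  fixes smult :: "'k::comm_ring_1 \<Rightarrow> 'a::{ring,monoid_mult} \<Rightarrow> 'a"
    and gr :: "int \<Rightarrow> 'a set" and d :: "'a \<Rightarrow> 'a"
  assumes dg: "dg_algebra smult gr d"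
begin

lemma d_add: "d (a + b) = d a + d b"
  using dg by (simp add: dg_algebra_def)

lemma d_zero: "d 0 = 0"
  using d_add[of 0 0] by simp

lemma d_minus: "d (- a) = - d a"
  using d_add[of a "- a"] d_zero by (simp add: eq_neg_iff_add_eq_0 add.commute)

lemma d_diff: "d (a - b) = d a - d b"
  using d_add[of a "- b"] d_minus[of b] by simp

lemma d_mult: "a \<in> gr n \<Longrightarrow> d (a * b) = d a * b + sgn_mult n (a * d b)"
  using dg by (simp add: dg_algebra_def)

lemma gr_zero: "0 \<in> gr n"
  using dg by (simp add: dg_algebra_def)

lemma gr_one: "1 \<in> gr 0"
  using dg by (simp add: dg_algebra_def)

lemma d_one: "d 1 = 0"
  using d_mult[OF gr_one, of 1] by (simp add: sgn_mult_def)

lemma gr_add: "a \<in> gr n \<Longrightarrow> b \<in> gr n \<Longrightarrow> a + b \<in> gr n"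
  using dg by (simp add: dg_algebra_def)

lemma gr_minus: "a \<in> gr n \<Longrightarrow> - a \<in> gr n"
  using dg by (simp add: dg_algebra_def)

lemma gr_diff: "a \<in> gr n \<Longrightarrow> b \<in> gr n \<Longrightarrow> a - b \<in> gr n"
  using gr_add[of a n "- b"] gr_minus[of b n] by simp

lemma gr_mult: "a \<in> gr m \<Longrightarrow> b \<in> gr n \<Longrightarrow> a * b \<in> gr (m + n)"
  using dg by (simp add: dg_algebra_def)

lemma smult_mult_right: "smult c (a * b) = a * smult c b"
proof -
  have "\<forall>c a b. smult c (a * b) = smult c a * b \<and> smult c (a * b) = a * smult c b"
    using dg unfolding dg_algebra_def by (elim conjE) assumption
  then show ?thesis by metis
qed

lemma module_map_deg_iff_left_mult:
  "module_map_deg smult gr n f \<longleftrightarrow> (\<exists>u\<in>gr n. f = (*) u)"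
proof
  assume f: "module_map_deg smult gr n f"
  then have right_linear: "\<forall>a b. f (a * b) = f a * b"
    unfolding module_map_deg_def by (elim conjE)
  from f have graded: "\<forall>m a. a \<in> gr m \<longrightarrow> f a \<in> gr (m + n)"
    unfolding module_map_deg_def by (elim conjE)
  have "f a = f 1 * a" for a
    using right_linear by (metis mult_1_left)
  then have "f = (*) (f 1)" ..
  moreover have "f 1 \<in> gr n"
    using graded gr_one by fastforce
  ultimately show "\<exists>u\<in>gr n. f = (*) u" by blast
next
  assume "\<exists>u\<in>gr n. f = (*) u"
  then obtain u where u: "u \<in> gr n" and f: "f = (*) u" by blast
  show "module_map_deg smult gr n f"
    unfolding module_map_deg_def f
  proof (intro conjI allI impI)
    fix m a assume "a \<in> gr m"
    then show "u * a \<in> gr (m + n)" using gr_mult[OF u] by (simp add: add.commute)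
  qed (auto simp: distrib_left smult_mult_right mult.assoc)
qed

lemma module_map_deg_left_mult_iff: "module_map_deg smult gr n ((*) u) \<longleftrightarrow> u \<in> gr n"
proof
  assume "module_map_deg smult gr n ((*) u)"
  then have "\<forall>m a. a \<in> gr m \<longrightarrow> u * a \<in> gr (m + n)"
    unfolding module_map_deg_def by (elim conjE)
  then show "u \<in> gr n"
    using gr_one by fastforce
next
  assume "u \<in> gr n"
  then show "module_map_deg smult gr n ((*) u)"
    unfolding module_map_deg_iff_left_mult by blast
qed

lemma closed_module_map_left_mult_iff:
  "closed_module_map smult gr d x x' ((*) u) \<longleftrightarrow> u \<in> gr 0 \<and> d u = u * x - x' * u"
proof -
  have "(\<forall>a. twisted_diff d x' (u * a) = u * twisted_diff d x a) \<longleftrightarrow> d u = u * x - x' * u"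
    if u: "u \<in> gr 0"
  proof -
    have "twisted_diff d x' (u * a) = (d u + x' * u) * a + u * d a" for a
      using d_mult[OF u, of a] by (simp add: twisted_diff_def sgn_mult_def algebra_simps)
    moreover have "u * twisted_diff d x a = (u * x) * a + u * d a" for a
      by (simp add: twisted_diff_def algebra_simps)
    ultimately show ?thesis
      using left_mult_eq_iff[of "d u + x' * u" "u * x"] by (simp add: eq_diff_eq)
  qed
  then show ?thesis
    unfolding closed_module_map_def module_map_deg_left_mult_iff by (cases "u \<in> gr 0") simp_all
qed

lemma cohomologous_to_id_left_mult_iff:
  "cohomologous_to_id smult gr d x ((*) w) \<longleftrightarrow> (\<exists>\<eta>\<in>gr (-1). d \<eta> = w - 1 - x * \<eta> - \<eta> * x)"
proof -
  have homotopy_iff: "(\<forall>a. w * a - a = twisted_diff d x (\<eta> * a) + \<eta> * twisted_diff d x a) \<longleftrightarrow>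
      d \<eta> = w - 1 - x * \<eta> - \<eta> * x"
    if \<eta>: "\<eta> \<in> gr (-1)" for \<eta>
  proof -
    have "twisted_diff d x (\<eta> * a) + \<eta> * twisted_diff d x a = (d \<eta> + x * \<eta> + \<eta> * x) * a" for a
      using d_mult[OF \<eta>, of a] by (simp add: twisted_diff_def sgn_mult_def algebra_simps)
    then have "(\<forall>a. w * a - a = twisted_diff d x (\<eta> * a) + \<eta> * twisted_diff d x a) \<longleftrightarrow>
        (\<forall>a. (w - 1) * a = (d \<eta> + x * \<eta> + \<eta> * x) * a)"
      by (simp add: left_diff_distrib)
    also have "\<dots> \<longleftrightarrow> w - 1 = d \<eta> + x * \<eta> + \<eta> * x"
      by (rule left_mult_eq_iff)
    also have "\<dots> \<longleftrightarrow> d \<eta> = w - 1 - x * \<eta> - \<eta> * x"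
      by (auto simp: algebra_simps)
    finally show ?thesis .
  qed
  show ?thesis
    unfolding cohomologous_to_id_def module_map_deg_iff_left_mult
  proof
    assume "\<exists>h. (\<exists>\<eta>\<in>gr (-1). h = (*) \<eta>) \<and>
      (\<forall>a. w * a - a = twisted_diff d x (h a) + h (twisted_diff d x a))"
    then obtain \<eta> where "\<eta> \<in> gr (-1)"
      and "\<forall>a. w * a - a = twisted_diff d x (\<eta> * a) + \<eta> * twisted_diff d x a"
      by blast
    then show "\<exists>\<eta>\<in>gr (-1). d \<eta> = w - 1 - x * \<eta> - \<eta> * x"
      using homotopy_iff by blast
  next
    assume "\<exists>\<eta>\<in>gr (-1). d \<eta> = w - 1 - x * \<eta> - \<eta> * x"
    then obtain \<eta> where "\<eta> \<in> gr (-1)" and "d \<eta> = w - 1 - x * \<eta> - \<eta> * x"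
      by blast
    then show "\<exists>h. (\<exists>\<eta>\<in>gr (-1). h = (*) \<eta>) \<and>
      (\<forall>a. w * a - a = twisted_diff d x (h a) + h (twisted_diff d x a))"
      using homotopy_iff by blast
  qed
qed

lemma homotopy_gauge_equiv_iff:
  "homotopy_gauge_equiv smult gr d x x' \<longleftrightarrow>
     (\<exists>u v \<eta> \<eta>'. homotopy_equivalence_data gr d x x' u v \<eta> \<eta>')"
proof -
  have closed_left_mult: "\<exists>u. f = (*) u" if "closed_module_map smult gr d y y' f" for y y' f
    using that unfolding closed_module_map_def module_map_deg_iff_left_mult by blast
  have comp: "(*) v \<circ> (*) u = (*) (v * u)" for u v :: 'a
    by (auto simp: mult.assoc)
  have "homotopy_gauge_equiv smult gr d x x' \<longleftrightarrow>
      (\<exists>u v. closed_module_map smult gr d x x' ((*) u) \<and> closed_module_map smult gr d x' x ((*) v) \<and>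
             cohomologous_to_id smult gr d x ((*) (v * u)) \<and> cohomologous_to_id smult gr d x' ((*) (u * v)))"
    (is "_ \<longleftrightarrow> (\<exists>u v. ?P u v)")
  proof
    assume "homotopy_gauge_equiv smult gr d x x'"
    then obtain f g where f: "closed_module_map smult gr d x x' f"
      and g: "closed_module_map smult gr d x' x g"
      and "cohomologous_to_id smult gr d x (g \<circ> f)" "cohomologous_to_id smult gr d x' (f \<circ> g)"
      unfolding homotopy_gauge_equiv_def by blast
    moreover obtain u v where "f = (*) u" "g = (*) v"
      using closed_left_mult[OF f] closed_left_mult[OF g] by blast
    ultimately have "?P u v" by (simp add: comp)
    then show "\<exists>u v. ?P u v" by blast
  next
    assume "\<exists>u v. ?P u v"
    then obtain u v where "?P u v" by blast
    then show "homotopy_gauge_equiv smult gr d x x'"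
      unfolding homotopy_gauge_equiv_def
      by (intro exI[of _ "(*) u"] exI[of _ "(*) v"]) (simp add: comp)
  qed
  also have "\<dots> \<longleftrightarrow> (\<exists>u v \<eta> \<eta>'. homotopy_equivalence_data gr d x x' u v \<eta> \<eta>')"
  proof (intro ex_cong1)
    fix u v
    show "?P u v \<longleftrightarrow> (\<exists>\<eta> \<eta>'. homotopy_equivalence_data gr d x x' u v \<eta> \<eta>')"
      unfolding closed_module_map_left_mult_iff cohomologous_to_id_left_mult_iff
        homotopy_equivalence_data_def
      by auto
  qed
  finally show ?thesis .
qed

lemma homotopy_equivalence_data_iff:
  "homotopy_equivalence_data gr d x x' u v \<eta> \<eta>' \<longleftrightarrow>
     u \<in> gr 0 \<and> v \<in> gr 0 \<and> \<eta> \<in> gr (-1) \<and> \<eta>' \<in> gr (-1) \<and>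
     edge_triangle_mc_equations d x x' (v - 1) (u - 1) (- \<eta>) (- \<eta>')"
proof -
  have "x' - x - x * (v - 1) + (v - 1) * x' = v * x' - x * v"
    and "x - x' - x' * (u - 1) + (u - 1) * x = u * x - x' * u"
    and "- (u - 1) - (v - 1) - x * - \<eta> - - \<eta> * x - (v - 1) * (u - 1) =
      - (v * u - 1 - x * \<eta> - \<eta> * x)"
    and "- (v - 1) - (u - 1) - x' * - \<eta>' - - \<eta>' * x' - (u - 1) * (v - 1) =
      - (u * v - 1 - x' * \<eta>' - \<eta>' * x')"
    by (simp_all add: algebra_simps)
  then have "edge_triangle_mc_equations d x x' (v - 1) (u - 1) (- \<eta>) (- \<eta>') \<longleftrightarrow>
      d v = v * x' - x * v \<and> d u = u * x - x' * u \<and>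
      d \<eta> = v * u - 1 - x * \<eta> - \<eta> * x \<and> d \<eta>' = u * v - 1 - x' * \<eta>' - \<eta>' * x'"
    unfolding edge_triangle_mc_equations_def
    by (simp only: d_diff d_one diff_zero d_minus neg_equal_iff_equal)
  then show ?thesis
    unfolding homotopy_equivalence_data_def by blast
qed

lemma K2_maurer_cartan_K2_cochain:
  assumes "maurer_cartan gr d x" and "maurer_cartan gr d x'"
    and "a01 \<in> gr 0" and "a10 \<in> gr 0" and "b010 \<in> gr (-1)" and "b101 \<in> gr (-1)"
    and "edge_triangle_mc_equations d x x' a01 a10 b010 b101"
  shows "K2_maurer_cartan gr d (K2_cochain x x' a01 a10 b010 b101)"
proof -
  have x: "x \<in> gr 1" "d x = - (x * x)" and x': "x' \<in> gr 1" "d x' = - (x' * x')"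
    using assms(1,2) by (auto simp: maurer_cartan_def eq_neg_iff_add_eq_0)
  show ?thesis
    unfolding K2_maurer_cartan_def K2_cochain_deg1_def
  proof (intro conjI allI impI)
    fix n s
    show "K2_cochain x x' a01 a10 b010 b101 n s \<in> gr (1 - int n)"
      unfolding K2_cochain_def using x(1) x'(1) assms(3-6) gr_zero by auto
  next
    fix n s
    assume "\<not> nondeg_K2 n s"
    then show "K2_cochain x x' a01 a10 b010 b101 n s = 0"
      using nondeg_K2_generators unfolding K2_cochain_def by auto
  next
    fix n s
    assume "(n, s) \<in> K2"
    then show "tensor_diff_deg1 d (K2_cochain x x' a01 a10 b010 b101) n s +
        tensor_square_deg1 (K2_cochain x x' a01 a10 b010 b101) n s = 0"
      by (rule mc_equation_K2_cochain[OF d_zero _ x(2) x'(2) assms(7)])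
  qed
qed

lemma homotopy_equivalence_data_of_K2_maurer_cartan:
  assumes "K2_maurer_cartan gr d X"
    and "X 0 (vertex_at 0) = x" and "X 0 (vertex_at 1) = x'"
  shows "homotopy_equivalence_data gr d x x' (1 + X 1 (affine_edge 1 0)) (1 + X 1 (affine_edge 0 1))
    (- X 2 (affine_triangle 0 1 0)) (- X 2 (affine_triangle 1 0 1))"
proof -
  have graded: "X n s \<in> gr (1 - int n)" for n s
    using assms(1) unfolding K2_maurer_cartan_def K2_cochain_deg1_def by blast
  have "X 1 s \<in> gr 0" "X 2 s \<in> gr (-1)" for s
    using graded[of 1 s] graded[of 2 s] by simp_all
  then show ?thesis
    unfolding homotopy_equivalence_data_iff
    using edge_triangle_mc_equations_of_K2_maurer_cartan[OF assms]
    by (simp add: gr_add gr_one gr_minus)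
qed

lemma K2_homotopic_iff:
  assumes "maurer_cartan gr d x" and "maurer_cartan gr d x'"
  shows "K2_homotopic gr d x x' \<longleftrightarrow> (\<exists>u v \<eta> \<eta>'. homotopy_equivalence_data gr d x x' u v \<eta> \<eta>')"
proof
  assume "K2_homotopic gr d x x'"
  then obtain X where "K2_maurer_cartan gr d X" "X 0 (vertex_at 0) = x" "X 0 (vertex_at 1) = x'"
    unfolding K2_homotopic_def by blast
  from homotopy_equivalence_data_of_K2_maurer_cartan[OF this]
  show "\<exists>u v \<eta> \<eta>'. homotopy_equivalence_data gr d x x' u v \<eta> \<eta>'"
    by blast
next
  assume "\<exists>u v \<eta> \<eta>'. homotopy_equivalence_data gr d x x' u v \<eta> \<eta>'"
  then obtain u v \<eta> \<eta>' where "homotopy_equivalence_data gr d x x' u v \<eta> \<eta>'"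
    by blast
  then have "v - 1 \<in> gr 0" "u - 1 \<in> gr 0" "- \<eta> \<in> gr (-1)" "- \<eta>' \<in> gr (-1)"
    and "edge_triangle_mc_equations d x x' (v - 1) (u - 1) (- \<eta>) (- \<eta>')"
    unfolding homotopy_equivalence_data_iff by (simp_all add: gr_diff gr_one gr_minus)
  then have "K2_maurer_cartan gr d (K2_cochain x x' (v - 1) (u - 1) (- \<eta>) (- \<eta>'))"
    by (rule K2_maurer_cartan_K2_cochain[OF assms])
  moreover have "K2_cochain x x' (v - 1) (u - 1) (- \<eta>) (- \<eta>') 0 (vertex_at 0) = x"
    and "K2_cochain x x' (v - 1) (u - 1) (- \<eta>) (- \<eta>') 0 (vertex_at 1) = x'"
    by (simp_all add: K2_cochain_def vertex_at_eq_iff)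
  ultimately show "K2_homotopic gr d x x'"
    unfolding K2_homotopic_def by blast
qed

end

theorem lemma5p5:
  fixes smult :: "'k::comm_ring_1 \<Rightarrow> 'a::{ring,monoid_mult} \<Rightarrow> 'a"
    and gr :: "int \<Rightarrow> 'a set" and d :: "'a \<Rightarrow> 'a" and x x' :: 'a
  assumes "dg_algebra smult gr d"
    and "maurer_cartan gr d x" and "maurer_cartan gr d x'"
  shows "homotopy_gauge_equiv smult gr d x x' \<longleftrightarrow> K2_homotopic gr d x x'"
proof -
  have "homotopy_gauge_equiv smult gr d x x' \<longleftrightarrow>
      (\<exists>u v \<eta> \<eta>'. homotopy_equivalence_data gr d x x' u v \<eta> \<eta>')"
    by (rule homotopy_gauge_equiv_iff[OF assms(1)])
  also have "\<dots> \<longleftrightarrow> K2_homotopic gr d x x'"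
    by (rule K2_homotopic_iff[OF assms, symmetric])
  finally show ?thesis .
qed

end
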